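(* Let $n\ge1$ and let $q$ be an integer coprime to $n$. (a) The linking form $(q/n)$ on $\mathbb Z_n$ is simple if and only if $q$ is congruent modulo $n$ to plus or minus a quadratic residue mod $n$ (i.e. $q\equiv\pm k^2 \pmod n$ for some integer $k$). (b) The linking form $(q/n)$ on $\mathbb Z_n$ is semisimple if and only if there is a factorization $n=n_1\cdots n_k$ with the $n_i$ pairwise relatively prime such that each form $(q_i/n_i)$ is simple, where $q_i=qn/n_i$.
   Context: For $n\ge1$ and $q$ coprime to $n$, $(q/n)$ denotes the nondegenerate symmetric linking form on $\mathbb Z_n$ with values in $\mathbb Q/\mathbb Z$ whose value on a generator paired with itself is $q/n$; $(q/n)\cong(q'/n)$ iff $q'\equiv k^2q \pmod n$ for some $k$ coprime to $n$. A linking form is simple if it is isomorphic to $(\pm1/m)$ for some $m\ge1$ (including the trivial form on $\mathbb Z_1=0$), and semisimple if it is isomorphic to an orthogonal direct sum of simple forms. *)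

theory Defs
  imports Complex_Main "HOL-Number_Theory.Cong"
begin

text \<open>A (finite) linking form is represented concretely as a triple
  (carrier, group addition, bilinear form), with form values in rat read modulo the integers
  (i.e. as values in Q/Z).\<close>

type_synonym ('a) lform = "'a set \<times> ('a \<Rightarrow> 'a \<Rightarrow> 'a) \<times> ('a \<Rightarrow> 'a \<Rightarrow> rat)"

definition lf_iso :: "'a lform \<Rightarrow> 'b lform \<Rightarrow> bool" where
  "lf_iso F G \<longleftrightarrow>
     (case F of (A, addA, bA) \<Rightarrow> case G of (B, addB, bB) \<Rightarrow>
       (\<exists>f. bij_betw f A B
          \<and> (\<forall>x\<in>A. \<forall>y\<in>A. f (addA x y) = addB (f x) (f y))
          \<and> (\<forall>x\<in>A. \<forall>y\<in>A. bA x y - bB (f x) (f y) \<in> \<int>)))"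

definition cyc_form :: "int \<Rightarrow> nat \<Rightarrow> int lform" where
  "cyc_form q n = ({0..<int n}, (\<lambda>x y. (x + y) mod int n),
                   (\<lambda>x y. of_int (q * x * y) / of_nat n))"

definition osum :: "(int \<times> nat) list \<Rightarrow> int list lform" where
  "osum L = ({xs. length xs = length L \<and> (\<forall>i<length L. 0 \<le> xs!i \<and> xs!i < int (snd (L!i)))},
             (\<lambda>xs ys. map (\<lambda>i. (xs!i + ys!i) mod int (snd (L!i))) [0..<length L]),
             (\<lambda>xs ys. \<Sum>i<length L. of_int (fst (L!i) * xs!i * ys!i) / of_nat (snd (L!i))))"

definition simple_lf :: "'a lform \<Rightarrow> bool" where
  "simple_lf F \<longleftrightarrow> (\<exists>m::nat. m \<ge> 1 \<and> (\<exists>e::int. e \<in> {1, -1} \<and> lf_iso F (cyc_form e m)))"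

definition semisimple_lf :: "'a lform \<Rightarrow> bool" where
  "semisimple_lf F \<longleftrightarrow>
     (\<exists>L::(int \<times> nat) list. (\<forall>(e, m)\<in>set L. e \<in> {1, -1} \<and> m \<ge> 1) \<and> lf_iso F (osum L))"

end

theory Submission
  imports Defs
begin

(*
  An isomorphism (q/n) \<cong> (e/m) forces m = n and sends the generator to some k with
  q = e k^2 (mod n); conversely, multiplication by a unit k is such an isomorphism.
  A group isomorphism from Z_n onto a sum of cyclic groups Z_(m_i) has the form
  x \<mapsto> (x g_i mod m_i)_i, and such a map is bijective iff the m_i are pairwise coprime
  with product n (Chinese remainder theorem).  The forms then agree iff
  q = \<Sum>_i e_i g_i^2 (n/m_i) (mod n), which splits into the congruences
  q (n/m_i) = e_i (g_i n/m_i)^2 (mod m_i), i.e. into simplicity of the forms (q n/m_i / m_i).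
*)

lemma frac_diff_in_Ints_iff_cong:
  assumes "m > 0"
  shows "(of_int a / of_nat m - of_int b / of_nat m :: rat) \<in> \<int> \<longleftrightarrow> [a = b] (mod int m)"
proof -
  have "(of_int a / of_nat m - of_int b / of_nat m :: rat) = of_int (a - b) / of_int (int m)"
    by (simp add: diff_divide_distrib)
  also have "\<dots> \<in> \<int> \<longleftrightarrow> int m dvd a - b"
  proof
    assume "(of_int (a - b) / of_int (int m) :: rat) \<in> \<int>"
    then obtain t where "(of_int (a - b) / of_int (int m) :: rat) = of_int t"
      by (elim Ints_cases)
    hence "(of_int (a - b) :: rat) = of_int (int m * t)" using assms by (simp add: field_simps)
    hence "a - b = int m * t" by (simp only: of_int_eq_iff)
    thus "int m dvd a - b" by simp
  next
    assume "int m dvd a - b"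
    then obtain t where "a - b = int m * t" by (elim dvdE)
    thus "(of_int (a - b) / of_int (int m) :: rat) \<in> \<int>" using assms by simp
  qed
  finally show ?thesis by (simp add: cong_iff_dvd_diff)
qed

lemma of_int_divide_rescale:
  assumes "m dvd n" "n > 0"
  shows "(of_int a / of_nat m :: rat) = of_int (a * int (n div m)) / of_nat n"
  using assms by (auto elim: dvdE)

lemma Ints_diff_trans:
  fixes a b c :: "'a :: ring_1"
  assumes "a - b \<in> \<int>" "b - c \<in> \<int>"
  shows "a - c \<in> \<int>"
proof -
  have "(a - b) + (b - c) \<in> \<int>" using assms by (rule Ints_add)
  thus ?thesis by simp
qed

lemma cong_cancel_factors_cong_one:
  assumes u: "[u = 1] (mod m)" and "[a * u * u = b * u * u] (mod m)"
  shows "[a = b] (mod m)"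
proof -
  have "[a * u * u = a * 1 * 1] (mod m)" "[b * u * u = b * 1 * 1] (mod m)"
    using u by (meson cong_mult cong_refl)+
  with assms(2) show ?thesis by (simp add: cong_def)
qed

lemma lf_iso_altdef:
  "lf_iso (A, addA, bA) G \<longleftrightarrow>
     (\<exists>f. bij_betw f A (fst G)
        \<and> (\<forall>x\<in>A. \<forall>y\<in>A. f (addA x y) = fst (snd G) (f x) (f y))
        \<and> (\<forall>x\<in>A. \<forall>y\<in>A. bA x y - snd (snd G) (f x) (f y) \<in> \<int>))"
  by (cases G) (simp add: lf_iso_def)

lemma lf_iso_cyc_form_mult_unit:
  assumes n: "n > 0" and k: "coprime k (int n)" and q: "[q = e * k^2] (mod int n)"
  shows "lf_iso (cyc_form q n) (cyc_form e n)"
proof -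
  let ?A = "{0..<int n}"
  define f where "f x = k * x mod int n" for x
  have "inj_on f ?A"
  proof
    fix x y assume "x \<in> ?A" "y \<in> ?A" "f x = f y"
    moreover from \<open>f x = f y\<close> have "[x = y] (mod int n)"
      using cong_mult_lcancel[OF k] by (simp add: f_def cong_def)
    ultimately show "x = y" by (simp add: cong_def)
  qed
  moreover have "f ` ?A = ?A"
  proof (rule card_subset_eq)
    show "f ` ?A \<subseteq> ?A" using n by (auto simp: f_def)
  qed (use card_image[OF \<open>inj_on f ?A\<close>] in auto)
  ultimately have "bij_betw f ?A ?A" by (simp add: bij_betw_def)
  moreover have "f ((x + y) mod int n) = (f x + f y) mod int n" for x y
    by (simp add: f_def mod_add_eq mod_mult_right_eq distrib_left)
  moreover have "(of_int (q * x * y) / of_nat n - of_int (e * f x * f y) / of_nat n :: rat) \<in> \<int>" for x y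
  proof -
    have "[q * x * y = e * (k * x) * (k * y)] (mod int n)"
      using cong_mult[OF cong_mult[OF q cong_refl[of x]] cong_refl[of y]]
      by (simp add: power2_eq_square ac_simps)
    also have "[e * (k * x) * (k * y) = e * f x * f y] (mod int n)"
      unfolding f_def by (intro cong_mult cong_refl) (auto simp: cong_def)
    finally show ?thesis using frac_diff_in_Ints_iff_cong[OF n] by blast
  qed
  ultimately show ?thesis unfolding cyc_form_def lf_iso_altdef by auto
qed

lemma simple_lf_cyc_form_iff:
  assumes n: "n > 0" and q: "coprime q (int n)"
  shows "simple_lf (cyc_form q n) \<longleftrightarrow> (\<exists>e k. e \<in> {1, -1} \<and> [q = e * k^2] (mod int n))"
proof
  assume "simple_lf (cyc_form q n)"
  then obtain m e f where e: "e \<in> {1, -1}" and bij: "bij_betw f {0..<int n} {0..<int m}"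
    and form: "\<forall>x\<in>{0..<int n}. \<forall>y\<in>{0..<int n}.
                 (of_int (q * x * y) / of_nat n - of_int (e * f x * f y) / of_nat m :: rat) \<in> \<int>"
    unfolding simple_lf_def cyc_form_def lf_iso_altdef fst_conv snd_conv by blast
  have "m = n" using bij_betw_same_card[OF bij] by simp
  \<comment> \<open>the generator of Z_n, taken as 1 mod n so that it lies in the carrier also for n = 1\<close>
  define u where "u = 1 mod int n"
  have u: "u \<in> {0..<int n}" "[u = 1] (mod int n)" using n by (auto simp: u_def cong_def)
  have "[q * u * u = e * f u * f u] (mod int n)"
    using form u(1) \<open>m = n\<close> frac_diff_in_Ints_iff_cong[OF n] by blast
  moreover have "[q * u * u = q * 1 * 1] (mod int n)" using u(2) by (meson cong_mult cong_refl)
  ultimately have "[q = e * (f u)^2] (mod int n)"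
    by (simp add: cong_def power2_eq_square mult.assoc)
  with e show "\<exists>e k. e \<in> {1, -1} \<and> [q = e * k^2] (mod int n)" by blast
next
  assume "\<exists>e k. e \<in> {1, -1} \<and> [q = e * k^2] (mod int n)"
  then obtain e k where e: "e \<in> {1, -1}" and qk: "[q = e * k^2] (mod int n)" by blast
  have "coprime (e * k^2) (int n)" using cong_imp_coprime[OF qk q] .
  hence "coprime k (int n)" by simp
  hence "lf_iso (cyc_form q n) (cyc_form e n)" using lf_iso_cyc_form_mult_unit[OF n _ qk] by blast
  thus "simple_lf (cyc_form q n)" unfolding simple_lf_def using n e by (intro exI[of _ n]) auto
qed

lemma simple_lf_cyc_form_mult_iff:
  assumes m: "m > 0" and q: "coprime q (int m)" and d: "coprime d (int m)"
  shows "simple_lf (cyc_form (q * d) m) \<longleftrightarrow> (\<exists>e g. e \<in> {1, -1} \<and> [q = e * g^2 * d] (mod int m))"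
proof -
  have "simple_lf (cyc_form (q * d) m) \<longleftrightarrow> (\<exists>e k. e \<in> {1, -1} \<and> [q * d = e * k^2] (mod int m))"
    using simple_lf_cyc_form_iff[OF m] q d by simp
  also have "\<dots> \<longleftrightarrow> (\<exists>e g. e \<in> {1, -1} \<and> [q = e * g^2 * d] (mod int m))"
  proof
    assume "\<exists>e k. e \<in> {1, -1} \<and> [q * d = e * k^2] (mod int m)"
    then obtain e k where e: "e \<in> {1, -1}" and qd: "[q * d = e * k^2] (mod int m)" by blast
    obtain v where v: "[d * v = 1] (mod int m)" using cong_solve_coprime_int[OF d] by blast
    have "[q = q * (d * v) * (d * v)] (mod int m)"
      using cong_mult[OF cong_mult[OF cong_refl[of q] v] v] by (simp add: cong_sym)
    also have "q * (d * v) * (d * v) = (q * d) * (v^2 * d)" by (simp add: power2_eq_square ac_simps)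
    also have "[\<dots> = (e * k^2) * (v^2 * d)] (mod int m)" by (intro cong_mult qd cong_refl)
    also have "(e * k^2) * (v^2 * d) = e * (k * v)^2 * d" by (simp add: power2_eq_square ac_simps)
    finally show "\<exists>e g. e \<in> {1, -1} \<and> [q = e * g^2 * d] (mod int m)" using e by blast
  next
    assume "\<exists>e g. e \<in> {1, -1} \<and> [q = e * g^2 * d] (mod int m)"
    then obtain e g where e: "e \<in> {1, -1}" and qg: "[q = e * g^2 * d] (mod int m)" by blast
    have "[q * d = e * g^2 * d * d] (mod int m)" by (intro cong_mult qg cong_refl)
    hence "[q * d = e * (g * d)^2] (mod int m)" by (simp add: power2_eq_square ac_simps)
    thus "\<exists>e k. e \<in> {1, -1} \<and> [q * d = e * k^2] (mod int m)" using e by blast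
  qed
  finally show ?thesis .
qed

lemma osum_carrier_Cons:
  "fst (osum (a # L)) = (\<lambda>(x, xs). x # xs) ` ({0..<int (snd a)} \<times> fst (osum L))"
proof (intro equalityI subsetI)
  fix xs assume xs: "xs \<in> fst (osum (a # L))"
  then obtain y ys where "xs = y # ys" by (cases xs) (auto simp: osum_def)
  with xs have "xs = y # ys" "y \<in> {0..<int (snd a)}" "ys \<in> fst (osum L)"
    by (force simp: osum_def)+
  thus "xs \<in> (\<lambda>(x, xs). x # xs) ` ({0..<int (snd a)} \<times> fst (osum L))" by force
qed (auto simp: osum_def nth_Cons split: nat.split)

lemma card_osum_carrier: "card (fst (osum L)) = prod_list (map snd L)"
proof (induction L)
  case Nil
  have "fst (osum []) = {[]}" by (auto simp: osum_def)
  then show ?case by simp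
next
  case (Cons a L)
  have "inj_on (\<lambda>(x, xs). x # xs) ({0..<int (snd a)} \<times> fst (osum L))"
    by (auto simp: inj_on_def)
  then show ?case
    by (simp add: osum_carrier_Cons card_image card_cartesian_product Cons.IH)
qed

lemma osum_add_nth:
  "i < length L \<Longrightarrow> fst (snd (osum L)) xs ys ! i = (xs!i + ys!i) mod int (snd (L!i))"
  by (simp add: osum_def)

definition pairwise_coprime :: "nat list \<Rightarrow> bool" where
  "pairwise_coprime ns \<longleftrightarrow> (\<forall>i<length ns. \<forall>j<length ns. i \<noteq> j \<longrightarrow> coprime (ns!i) (ns!j))"

lemma prod_dvd_if_pairwise_coprime:
  fixes f :: "'a \<Rightarrow> int"
  assumes "finite I" "\<And>i j. i \<in> I \<Longrightarrow> j \<in> I \<Longrightarrow> i \<noteq> j \<Longrightarrow> coprime (f i) (f j)"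
    and "\<And>i. i \<in> I \<Longrightarrow> f i dvd d"
  shows "prod f I dvd d"
  using assms
proof (induction I rule: finite_induct)
  case (insert i I)
  have "coprime (f i) (prod f I)"
    using insert.prems(1) insert.hyps(2) by (intro prod_coprime_right) auto
  with insert show ?case by (simp add: divides_mult)
qed simp

lemma prod_list_dvd_if_pairwise_coprime:
  assumes "pairwise_coprime ns" "\<And>i. i < length ns \<Longrightarrow> int (ns!i) dvd d"
  shows "int (prod_list ns) dvd d"
proof -
  have "(\<Prod>i\<in>{0..<length ns}. int (ns!i)) dvd d"
    using assms by (intro prod_dvd_if_pairwise_coprime) (auto simp: pairwise_coprime_def)
  thus ?thesis by (simp add: prod.list_conv_set_nth)
qed

lemma nth_dvd_prod_list: "i < length ns \<Longrightarrow> ns!i dvd prod_list (ns :: nat list)"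
  by (simp add: prod_list_dvd)

lemma prod_list_div_nth_coprime:
  assumes "pairwise_coprime ns" "i < length ns" "ns!i > 0"
  shows "coprime (prod_list ns div ns!i) (ns!i)"
proof -
  have "prod_list ns = ns!i * (\<Prod>j\<in>{..<length ns} - {i}. ns!j)"
    using assms(2) by (simp add: prod.list_conv_set_nth atLeast0LessThan prod.remove)
  moreover have "coprime (\<Prod>j\<in>{..<length ns} - {i}. ns!j) (ns!i)"
    using assms(1,2) by (intro prod_coprime_left) (auto simp: pairwise_coprime_def)
  ultimately show ?thesis using assms(3) by simp
qed

lemma nth_dvd_prod_list_div_nth:
  assumes "pairwise_coprime ns" "i < length ns" "j < length ns" "i \<noteq> j"
  shows "ns!i dvd prod_list ns div ns!j"
proof -
  have "ns!j * ns!i dvd prod_list ns"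
    using assms by (intro divides_mult nth_dvd_prod_list) (auto simp: pairwise_coprime_def)
  then obtain k where "prod_list ns = ns!j * ns!i * k" by (rule dvdE)
  thus ?thesis by (cases "ns!j = 0") (simp_all add: mult.assoc)
qed

lemma cong_sum_cofactors_iff:
  assumes "pairwise_coprime ns" "prod_list ns = n"
  shows "[q = (\<Sum>i<length ns. t i * int (n div ns!i))] (mod int n) \<longleftrightarrow>
         (\<forall>i<length ns. [q = t i * int (n div ns!i)] (mod int (ns!i)))"
proof -
  define s where "s = (\<Sum>i<length ns. t i * int (n div ns!i))"
  have s_cong: "[s = t i * int (n div ns!i)] (mod int (ns!i))" if i: "i < length ns" for i
  proof -
    have "int (ns!i) dvd (\<Sum>j\<in>{..<length ns} - {i}. t j * int (n div ns!j))"
      using assms nth_dvd_prod_list_div_nth[OF assms(1) i] by (intro dvd_sum) auto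
    moreover have "s = t i * int (n div ns!i) + (\<Sum>j\<in>{..<length ns} - {i}. t j * int (n div ns!j))"
      using i by (simp add: s_def sum.remove)
    ultimately show ?thesis by (simp add: cong_iff_dvd_diff)
  qed
  have "[q = s] (mod int n) \<longleftrightarrow> (\<forall>i<length ns. [q = s] (mod int (ns!i)))"
  proof
    assume "[q = s] (mod int n)"
    thus "\<forall>i<length ns. [q = s] (mod int (ns!i))"
      using assms(2) nth_dvd_prod_list by (metis cong_dvd_modulus of_nat_dvd_iff)
  next
    assume "\<forall>i<length ns. [q = s] (mod int (ns!i))"
    hence "int n dvd s - q"
      using assms by (metis cong_iff_dvd_diff cong_sym prod_list_dvd_if_pairwise_coprime)
    thus "[q = s] (mod int n)" by (simp add: cong_iff_dvd_diff dvd_diff_commute)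
  qed
  also have "\<dots> \<longleftrightarrow> (\<forall>i<length ns. [q = t i * int (n div ns!i)] (mod int (ns!i)))"
    using s_cong by (meson cong_sym cong_trans)
  finally show ?thesis unfolding s_def .
qed

definition cyc_to_osum :: "(int \<times> nat) list \<Rightarrow> (nat \<Rightarrow> int) \<Rightarrow> int \<Rightarrow> int list" where
  "cyc_to_osum L g x = map (\<lambda>i. x * g i mod int (snd (L!i))) [0..<length L]"

lemma cyc_to_osum_nth:
  "i < length L \<Longrightarrow> cyc_to_osum L g x ! i = x * g i mod int (snd (L!i))"
  by (simp add: cyc_to_osum_def)

lemma double_mod_eq_self_imp_zero:
  fixes a m :: int
  assumes "0 \<le> a" "a < m" "(a + a) mod m = a"
  shows "a = 0"
proof (cases "a + a < m")
  case False
  have "(a + a) mod m = (a + a - m) mod m" by simp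
  also have "\<dots> = a + a - m" using False assms(2) by (intro mod_pos_pos_trivial) auto
  finally show ?thesis using assms by simp
qed (use assms in simp)

lemma cyc_hom_to_osum_eq:
  fixes f :: "int \<Rightarrow> int list"
  assumes into: "\<forall>x\<in>{0..<int n}. f x \<in> fst (osum L)"
    and add: "\<forall>x\<in>{0..<int n}. \<forall>y\<in>{0..<int n}.
                f ((x + y) mod int n) = fst (snd (osum L)) (f x) (f y)"
    and x: "x \<in> {0..<int n}"
  shows "f x = cyc_to_osum L (\<lambda>i. f (1 mod int n) ! i) x"
proof -
  define g where "g = (\<lambda>i. f (1 mod int n) ! i)"
  have zero_in: "0 \<in> {0..<int n}" using x by simp
  have f_range: "0 \<le> f x ! j \<and> f x ! j < int (snd (L!j))"
    if "x \<in> {0..<int n}" "j < length L" for x j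
    using into that by (auto simp: osum_def)
  have f_zero: "f 0 ! j = 0" if j: "j < length L" for j
  proof (rule double_mod_eq_self_imp_zero)
    show "(f 0 ! j + f 0 ! j) mod int (snd (L!j)) = f 0 ! j"
      using add zero_in j by (metis add_0 mod_0 osum_add_nth)
  qed (use f_range[OF zero_in j] in auto)
  have f_int: "f (int k) ! j = int k * g j mod int (snd (L!j))"
    if "k < n" "j < length L" for k j
    using that
  proof (induction k)
    case 0
    then show ?case using f_zero by simp
  next
    case (Suc k)
    hence one: "1 mod int n = 1" and k_in: "int k \<in> {0..<int n}" and one_in: "1 \<in> {0..<int n}"
      by auto
    have "f (int (Suc k)) = f ((int k + 1) mod int n)" using Suc.prems by (simp add: add.commute)
    also have "\<dots> = fst (snd (osum L)) (f (int k)) (f 1)" using add k_in one_in by blast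
    finally have "f (int (Suc k)) ! j = (f (int k) ! j + g j) mod int (snd (L!j))"
      using Suc.prems by (simp add: osum_add_nth g_def one)
    also have "\<dots> = (int k * g j + g j) mod int (snd (L!j))"
      using Suc by (simp add: mod_add_left_eq)
    finally show ?case by (simp add: distrib_right add.commute)
  qed
  have len: "length (f x) = length L" using into x by (auto simp: osum_def)
  show ?thesis unfolding g_def[symmetric]
  proof (rule nth_equalityI)
    show "length (f x) = length (cyc_to_osum L g x)" using len by (simp add: cyc_to_osum_def)
    fix j assume "j < length (f x)"
    hence j: "j < length L" using len by simp
    have "nat x < n" "int (nat x) = x" using x by auto
    with f_int[OF _ j] show "f x ! j = cyc_to_osum L g x ! j"
      using j by (metis cyc_to_osum_nth)
  qed
qed

lemma cyc_to_osum_surj_imp_pairwise_coprime: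
  assumes surj: "fst (osum L) \<subseteq> cyc_to_osum L g ` A"
    and pos: "\<And>i. i < length L \<Longrightarrow> snd (L!i) > 0"
  shows "pairwise_coprime (map snd L)"
proof -
  have unit_preimage: "\<exists>x. [x * g i = 1] (mod int (snd (L!i)))
      \<and> (\<forall>j<length L. j \<noteq> i \<longrightarrow> int (snd (L!j)) dvd x * g j)" if i: "i < length L" for i
  proof -
    define u where "u = map (\<lambda>j. if j = i then 1 mod int (snd (L!j)) else 0) [0..<length L]"
    have "u \<in> fst (osum L)" using pos by (auto simp: u_def osum_def)
    then obtain x where x: "cyc_to_osum L g x = u" using surj by blast
    have "x * g j mod int (snd (L!j)) = (if j = i then 1 mod int (snd (L!j)) else 0)"
      if "j < length L" for j
      using arg_cong[OF x, of "\<lambda>xs. xs ! j"] that by (simp add: cyc_to_osum_nth u_def)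
    thus ?thesis using i by (intro exI[of _ x]) (auto simp: cong_def dvd_eq_mod_eq_0)
  qed
  have g_coprime: "coprime (g j) (int (snd (L!j)))" if "j < length L" for j
    using unit_preimage[OF that] coprime_iff_invertible_int by (metis mult.commute)
  have "coprime (snd (L!j)) (snd (L!i))" if ij: "i < length L" "j < length L" "i \<noteq> j" for i j
  proof -
    obtain x where x_inv: "[x * g i = 1] (mod int (snd (L!i)))"
      and x_dvd: "int (snd (L!j)) dvd x * g j"
      using unit_preimage[OF ij(1)] ij by blast
    have "int (snd (L!j)) dvd x"
      using x_dvd g_coprime[OF ij(2)] by (metis coprime_commute coprime_dvd_mult_left_iff)
    moreover have "coprime x (int (snd (L!i)))"
      using x_inv coprime_iff_invertible_int by blast
    ultimately have "coprime (int (snd (L!j))) (int (snd (L!i)))"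
      using coprime_divisors dvd_refl by blast
    thus ?thesis by simp
  qed
  thus ?thesis by (auto simp: pairwise_coprime_def)
qed

lemma bij_betw_cyc_to_osum:
  assumes prod: "prod_list (map snd L) = n" and n: "n > 0"
    and pw: "pairwise_coprime (map snd L)"
    and g: "\<And>i. i < length L \<Longrightarrow> coprime (g i) (int (snd (L!i)))"
  shows "bij_betw (cyc_to_osum L g) {0..<int n} (fst (osum L))"
proof -
  let ?A = "{0..<int n}"
  have pos: "snd (L!i) > 0" if "i < length L" for i
    using nth_dvd_prod_list[of i "map snd L"] that prod n by (auto intro: dvd_pos_nat)
  have "inj_on (cyc_to_osum L g) ?A"
  proof
    fix x y assume xy: "x \<in> ?A" "y \<in> ?A" "cyc_to_osum L g x = cyc_to_osum L g y"
    have "int (map snd L ! i) dvd x - y" if i: "i < length L" for i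
    proof -
      have "[x * g i = y * g i] (mod int (snd (L!i)))"
        using arg_cong[OF xy(3), of "\<lambda>xs. xs ! i"] i by (simp add: cyc_to_osum_nth cong_def)
      hence "[x = y] (mod int (snd (L!i)))" using cong_mult_rcancel[OF g[OF i]] by simp
      thus ?thesis using i by (simp add: cong_iff_dvd_diff)
    qed
    hence "int n dvd x - y" using pw prod prod_list_dvd_if_pairwise_coprime by fastforce
    thus "x = y" using xy by (metis cong_iff_dvd_diff cong_def atLeastLessThan_iff mod_pos_pos_trivial)
  qed
  moreover have "cyc_to_osum L g ` ?A = fst (osum L)"
  proof (rule card_subset_eq)
    show "finite (fst (osum L))"
      using card_osum_carrier[of L] prod n by (intro card_ge_0_finite) simp
    show "cyc_to_osum L g ` ?A \<subseteq> fst (osum L)"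
      using pos by (auto simp: cyc_to_osum_def osum_def)
    show "card (cyc_to_osum L g ` ?A) = card (fst (osum L))"
      using card_image[OF \<open>inj_on (cyc_to_osum L g) ?A\<close>] card_osum_carrier[of L] prod by simp
  qed
  ultimately show ?thesis by (simp add: bij_betw_def)
qed

lemma cyc_to_osum_add:
  assumes "\<And>i. i < length L \<Longrightarrow> snd (L!i) dvd n"
  shows "cyc_to_osum L g ((x + y) mod int n)
           = fst (snd (osum L)) (cyc_to_osum L g x) (cyc_to_osum L g y)"
proof -
  have "(x + y) mod int n * g i mod int (snd (L!i))
        = (x * g i mod int (snd (L!i)) + y * g i mod int (snd (L!i))) mod int (snd (L!i))"
    if "i < length L" for i
  proof -
    have "(x + y) mod int n * g i mod int (snd (L!i)) = (x + y) * g i mod int (snd (L!i))"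
      using assms[OF that] by (metis mod_mod_cancel mod_mult_left_eq of_nat_dvd_iff int_dvd_int_iff)
    thus ?thesis by (simp add: distrib_right mod_add_eq)
  qed
  thus ?thesis by (simp add: cyc_to_osum_def osum_def)
qed

lemma osum_form_cyc_to_osum:
  assumes dvd: "\<And>i. i < length L \<Longrightarrow> snd (L!i) dvd n" and n: "n > 0"
  shows "snd (snd (osum L)) (cyc_to_osum L g x) (cyc_to_osum L g y)
           - of_int ((\<Sum>i<length L. fst (L!i) * g i ^ 2 * int (n div snd (L!i))) * x * y) / of_nat n
         \<in> \<int>"
proof -
  define a where "a i = (of_int (fst (L!i) * cyc_to_osum L g x ! i * cyc_to_osum L g y ! i)
                          / of_nat (snd (L!i)) :: rat)" for i
  define b where "b i = (of_int (fst (L!i) * g i ^ 2 * int (n div snd (L!i)) * x * y)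
                          / of_nat n :: rat)" for i
  have "a i - b i \<in> \<int>" if i: "i < length L" for i
  proof -
    have pos: "snd (L!i) > 0" using dvd[OF i] n by (rule dvd_pos_nat[rotated])
    have "b i = of_int (fst (L!i) * g i ^ 2 * x * y * int (n div snd (L!i))) / of_nat n"
      by (simp add: b_def ac_simps)
    also have "\<dots> = of_int (fst (L!i) * g i ^ 2 * x * y) / of_nat (snd (L!i))"
      by (rule of_int_divide_rescale[OF dvd[OF i] n, symmetric])
    finally have "b i = of_int (fst (L!i) * g i ^ 2 * x * y) / of_nat (snd (L!i))" .
    moreover have "[fst (L!i) * cyc_to_osum L g x ! i * cyc_to_osum L g y ! i
                    = fst (L!i) * g i ^ 2 * x * y] (mod int (snd (L!i)))"
    proof -
      have "[fst (L!i) * cyc_to_osum L g x ! i * cyc_to_osum L g y ! i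
             = fst (L!i) * (x * g i) * (y * g i)] (mod int (snd (L!i)))"
        using i by (intro cong_mult cong_refl) (auto simp: cyc_to_osum_nth cong_def)
      thus ?thesis by (simp add: power2_eq_square ac_simps)
    qed
    ultimately show ?thesis unfolding a_def by (simp only: frac_diff_in_Ints_iff_cong[OF pos])
  qed
  hence "(\<Sum>i<length L. a i - b i) \<in> \<int>" by (intro Ints_sum) auto
  thus ?thesis
    by (simp add: a_def b_def osum_def sum_subtractf sum_divide_distrib sum_distrib_right)
qed

lemma lf_iso_cyc_form_osumD:
  assumes n: "n > 0" and iso: "lf_iso (cyc_form q n) (osum L)"
  shows "prod_list (map snd L) = n" "pairwise_coprime (map snd L)"
    and "\<exists>g. \<forall>i<length L. [q = fst (L!i) * g i ^ 2 * int (n div snd (L!i))] (mod int (snd (L!i)))"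
proof -
  let ?A = "{0..<int n}"
  obtain f where bij: "bij_betw f ?A (fst (osum L))"
    and add: "\<forall>x\<in>?A. \<forall>y\<in>?A. f ((x + y) mod int n) = fst (snd (osum L)) (f x) (f y)"
    and form: "\<forall>x\<in>?A. \<forall>y\<in>?A. of_int (q * x * y) / of_nat n - snd (snd (osum L)) (f x) (f y) \<in> \<int>"
    using iso unfolding cyc_form_def lf_iso_altdef by blast
  show prod: "prod_list (map snd L) = n"
    using bij_betw_same_card[OF bij] by (simp add: card_osum_carrier)
  have dvd: "snd (L!i) dvd n" if "i < length L" for i
    using nth_dvd_prod_list[of i "map snd L"] that prod by simp
  define g where "g i = f (1 mod int n) ! i" for i
  have f_eq: "f x = cyc_to_osum L g x" if "x \<in> ?A" for x
    unfolding g_def using bij add that by (intro cyc_hom_to_osum_eq) (auto dest: bij_betwE)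
  hence bij': "bij_betw (cyc_to_osum L g) ?A (fst (osum L))"
    using bij bij_betw_cong by blast
  show "pairwise_coprime (map snd L)"
    using bij_betw_imp_surj_on[OF bij'] dvd n
    by (intro cyc_to_osum_surj_imp_pairwise_coprime[of L g ?A]) (auto intro: dvd_pos_nat)
  define T where "T = (\<Sum>i<length L. fst (L!i) * g i ^ 2 * int (n div snd (L!i)))"
  define u where "u = 1 mod int n"
  have u: "u \<in> ?A" "[u = 1] (mod int n)" using n by (auto simp: u_def cong_def)
  have "of_int (q * u * u) / of_nat n - snd (snd (osum L)) (f u) (f u) \<in> \<int>"
    using form u by blast
  moreover have "snd (snd (osum L)) (f u) (f u) - of_int (T * u * u) / of_nat n \<in> \<int>"
    unfolding f_eq[OF u(1)] T_def using dvd n by (rule osum_form_cyc_to_osum)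
  ultimately have "(of_int (q * u * u) / of_nat n - of_int (T * u * u) / of_nat n :: rat) \<in> \<int>"
    by (rule Ints_diff_trans)
  hence "[q * u * u = T * u * u] (mod int n)" using frac_diff_in_Ints_iff_cong[OF n] by blast
  hence "[q = T] (mod int n)" using u(2) cong_cancel_factors_cong_one by blast
  thus "\<exists>g. \<forall>i<length L. [q = fst (L!i) * g i ^ 2 * int (n div snd (L!i))] (mod int (snd (L!i)))"
    using cong_sum_cofactors_iff[of "map snd L" n q "\<lambda>i. fst (L!i) * g i ^ 2"]
      \<open>pairwise_coprime (map snd L)\<close> prod
    by (auto simp: T_def)
qed

lemma lf_iso_cyc_form_osumI:
  assumes n: "n > 0" and q: "coprime q (int n)"
    and prod: "prod_list (map snd L) = n" and pw: "pairwise_coprime (map snd L)"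
    and g: "\<And>i. i < length L \<Longrightarrow>
              [q = fst (L!i) * g i ^ 2 * int (n div snd (L!i))] (mod int (snd (L!i)))"
  shows "lf_iso (cyc_form q n) (osum L)"
proof -
  let ?A = "{0..<int n}"
  have dvd: "snd (L!i) dvd n" if "i < length L" for i
    using nth_dvd_prod_list[of i "map snd L"] that prod by simp
  have "coprime (g i) (int (snd (L!i)))" if i: "i < length L" for i
  proof -
    have "coprime q (int (snd (L!i)))"
      using q dvd[OF i] by (meson coprime_divisors dvd_refl int_dvd_int_iff)
    hence "coprime (fst (L!i) * g i ^ 2 * int (n div snd (L!i))) (int (snd (L!i)))"
      using cong_imp_coprime[OF g[OF i]] by blast
    thus ?thesis by simp
  qed
  hence bij: "bij_betw (cyc_to_osum L g) ?A (fst (osum L))"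
    using prod n pw by (rule bij_betw_cyc_to_osum[rotated 3])
  define T where "T = (\<Sum>i<length L. fst (L!i) * g i ^ 2 * int (n div snd (L!i)))"
  have "[q = T] (mod int n)"
    using cong_sum_cofactors_iff[of "map snd L" n q "\<lambda>i. fst (L!i) * g i ^ 2"] pw prod g
    by (simp add: T_def)
  have "of_int (q * x * y) / of_nat n
          - snd (snd (osum L)) (cyc_to_osum L g x) (cyc_to_osum L g y) \<in> \<int>" for x y
  proof -
    have "[q * x * y = T * x * y] (mod int n)"
      using \<open>[q = T] (mod int n)\<close> by (intro cong_mult cong_refl)
    hence "(of_int (q * x * y) / of_nat n - of_int (T * x * y) / of_nat n :: rat) \<in> \<int>"
      using frac_diff_in_Ints_iff_cong[OF n] by blast
    moreover have "snd (snd (osum L)) (cyc_to_osum L g x) (cyc_to_osum L g y)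
                     - of_int (T * x * y) / of_nat n \<in> \<int>"
      unfolding T_def using dvd n by (rule osum_form_cyc_to_osum)
    ultimately show ?thesis using Ints_minus Ints_diff_trans by fastforce
  qed
  with bij show ?thesis
    unfolding cyc_form_def lf_iso_altdef using cyc_to_osum_add[OF dvd] by blast
qed

lemma simple_lf_cyc_form_cofactor_iff:
  assumes n: "n > 0" and q: "coprime q (int n)"
    and prod: "prod_list ns = n" and pw: "pairwise_coprime ns" and i: "i < length ns"
  shows "simple_lf (cyc_form (q * int (n div ns!i)) (ns!i)) \<longleftrightarrow>
           (\<exists>e g. e \<in> {1, -1} \<and> [q = e * g^2 * int (n div ns!i)] (mod int (ns!i)))"
proof (rule simple_lf_cyc_form_mult_iff)
  have dvd: "ns!i dvd n" using nth_dvd_prod_list[OF i] prod by simp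
  thus pos: "ns!i > 0" using n by (rule dvd_pos_nat[rotated])
  show "coprime q (int (ns!i))" using q dvd by (meson coprime_divisors dvd_refl int_dvd_int_iff)
  show "coprime (int (n div ns!i)) (int (ns!i))"
    using prod_list_div_nth_coprime[OF pw i pos] prod by simp
qed

lemma semisimple_lf_cyc_form_iff:
  assumes n: "n > 0" and q: "coprime q (int n)"
  shows "semisimple_lf (cyc_form q n) \<longleftrightarrow>
           (\<exists>ns. prod_list ns = n \<and> pairwise_coprime ns
                 \<and> (\<forall>i<length ns. simple_lf (cyc_form (q * int (n div ns!i)) (ns!i))))"
proof
  assume "semisimple_lf (cyc_form q n)"
  then obtain L where L: "\<forall>(e, m)\<in>set L. e \<in> {1, -1} \<and> m \<ge> 1"
    and iso: "lf_iso (cyc_form q n) (osum L)"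
    unfolding semisimple_lf_def by blast
  note prod = lf_iso_cyc_form_osumD(1)[OF n iso] and pw = lf_iso_cyc_form_osumD(2)[OF n iso]
  obtain g where g: "\<forall>i<length L. [q = fst (L!i) * g i ^ 2 * int (n div snd (L!i))] (mod int (snd (L!i)))"
    using lf_iso_cyc_form_osumD(3)[OF n iso] by blast
  have "simple_lf (cyc_form (q * int (n div map snd L ! i)) (map snd L ! i))"
    if i: "i < length L" for i
  proof -
    have "fst (L!i) \<in> {1, -1}" using L nth_mem[OF i] by (cases "L!i") auto
    moreover have "[q = fst (L!i) * g i ^ 2 * int (n div map snd L ! i)] (mod int (map snd L ! i))"
      using g i by simp
    ultimately show ?thesis using simple_lf_cyc_form_cofactor_iff[OF n q prod pw, of i] i by auto
  qed
  thus "\<exists>ns. prod_list ns = n \<and> pairwise_coprime ns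
              \<and> (\<forall>i<length ns. simple_lf (cyc_form (q * int (n div ns!i)) (ns!i)))"
    using prod pw by (intro exI[of _ "map snd L"]) auto
next
  assume "\<exists>ns. prod_list ns = n \<and> pairwise_coprime ns
               \<and> (\<forall>i<length ns. simple_lf (cyc_form (q * int (n div ns!i)) (ns!i)))"
  then obtain ns where prod: "prod_list ns = n" and pw: "pairwise_coprime ns"
    and simple: "\<forall>i<length ns. simple_lf (cyc_form (q * int (n div ns!i)) (ns!i))" by blast
  have "\<forall>i. \<exists>e g. i < length ns \<longrightarrow> e \<in> {1, -1} \<and> [q = e * g^2 * int (n div ns!i)] (mod int (ns!i))"
    using simple simple_lf_cyc_form_cofactor_iff[OF n q prod pw] by blast
  then obtain E G where EG: "\<And>i. i < length ns \<Longrightarrow>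
      E i \<in> {1, -1} \<and> [q = E i * G i ^ 2 * int (n div ns!i)] (mod int (ns!i))"
    by metis
  define L where "L = map (\<lambda>i. (E i, ns!i)) [0..<length ns]"
  have map_snd: "map snd L = ns" by (simp add: L_def comp_def map_nth)
  have "lf_iso (cyc_form q n) (osum L)"
    using n q prod pw EG
    by (intro lf_iso_cyc_form_osumI[where g = G]) (simp_all add: map_snd, simp add: L_def)
  moreover have "\<forall>(e, m)\<in>set L. e \<in> {1, -1} \<and> m \<ge> 1"
    using EG dvd_pos_nat[OF n] nth_dvd_prod_list prod by (fastforce simp: L_def Suc_le_eq)
  ultimately show "semisimple_lf (cyc_form q n)" unfolding semisimple_lf_def by blast
qed

theorem proposition1p7:
  fixes n :: nat and q :: int
  assumes "n \<ge> 1" and "coprime q (int n)"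
  shows "(simple_lf (cyc_form q n) \<longleftrightarrow>
            (\<exists>k::int. [q = k^2] (mod int n) \<or> [q = - (k^2)] (mod int n)))
       \<and> (semisimple_lf (cyc_form q n) \<longleftrightarrow>
            (\<exists>ns::nat list. prod_list ns = n
               \<and> (\<forall>i<length ns. \<forall>j<length ns. i \<noteq> j \<longrightarrow> coprime (ns!i) (ns!j))
               \<and> (\<forall>i<length ns. simple_lf (cyc_form (q * int (n div ns!i)) (ns!i)))))"
proof
  have n: "n > 0" using assms(1) by simp
  show "simple_lf (cyc_form q n) \<longleftrightarrow>
          (\<exists>k::int. [q = k^2] (mod int n) \<or> [q = - (k^2)] (mod int n))"
  proof -
    have "(\<exists>e k. e \<in> {1, -1} \<and> [q = e * k^2] (mod int n))
            \<longleftrightarrow> (\<exists>k::int. [q = k^2] (mod int n) \<or> [q = - (k^2)] (mod int n))"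
      by (metis insertCI insertE singletonD mult_1 mult_minus1)
    thus ?thesis using simple_lf_cyc_form_iff[OF n assms(2)] by simp
  qed
  show "semisimple_lf (cyc_form q n) \<longleftrightarrow>
          (\<exists>ns::nat list. prod_list ns = n
             \<and> (\<forall>i<length ns. \<forall>j<length ns. i \<noteq> j \<longrightarrow> coprime (ns!i) (ns!j))
             \<and> (\<forall>i<length ns. simple_lf (cyc_form (q * int (n div ns!i)) (ns!i))))"
    using semisimple_lf_cyc_form_iff[OF n assms(2)] by (simp add: pairwise_coprime_def)
qed

end
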